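(* Let $A\in M_n(\mathbb{Z})$ induce an ergodic endomorphism of $\mathbb{T}^n$, and suppose there exist $P,B\in M_n(\mathbb{Z})$ with $\det P\neq0$ and $PA=BP$. If the torus endomorphism induced by $B$ admits a uniformly distributed sequence of periodic orbits, then so does $A$.
   Context: For $M\in M_n(\mathbb{Z})$ with $\det M\neq 0$, the induced endomorphism of $\mathbb{T}^n=\mathbb{R}^n/\mathbb{Z}^n$ is $x\mapsto Mx\bmod 1$; ergodic means ergodic with respect to Lebesgue measure. The metric on $\mathbb{T}^n$ is $d(x,y)=\min_{m\in\mathbb{Z}^n}|\tilde x-\tilde y-m|$ (Euclidean norm). For a periodic orbit $O$, $T(O)$ is its period (cardinality) and $d(O)=\min\{d(x,y):x,y\in O,x\neq y\}$. A sequence of periodic orbits $\{O_k\}$ is uniformly distributed if there is $C>0$ with $d(O_k)^nT(O_k)\ge C$ for all $k$ and $T(O_k)\to+\infty$. *)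

theory Defs
  imports "HOL-Analysis.Analysis"
begin

text \<open>The torus R^n/Z^n is represented by the fundamental domain [0,1)^n,
  with the dimension n given by the finite index type 'n.\<close>

definition torus :: "(real^'n) set" where
  "torus = {x. \<forall>i. 0 \<le> x $ i \<and> x $ i < 1}"

definition int_lattice :: "(real^'n) set" where
  "int_lattice = {m. \<forall>i. m $ i \<in> \<int>}"

definition rmat :: "int^'n^'n \<Rightarrow> real^'n^'n" where
  "rmat M = (\<chi> i j. of_int (M $ i $ j))"

definition tmap :: "int^'n^'n \<Rightarrow> real^'n \<Rightarrow> real^'n" where
  "tmap M x = (\<chi> i. frac ((rmat M *v x) $ i))"

definition tdist :: "real^'n \<Rightarrow> real^'n \<Rightarrow> real" where
  "tdist x y = Inf {norm (x - y - m) | m. m \<in> int_lattice}"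

definition torus_measure :: "(real^'n) measure" where
  "torus_measure = restrict_space lebesgue torus"

definition ergodic_tmap :: "int^'n^'n \<Rightarrow> bool" where
  "ergodic_tmap M \<longleftrightarrow>
     tmap M \<in> torus_measure \<rightarrow>\<^sub>M torus_measure \<and>
     (\<forall>S \<in> sets torus_measure.
        emeasure torus_measure (tmap M -` S \<inter> space torus_measure) = emeasure torus_measure S) \<and>
     (\<forall>S \<in> sets torus_measure.
        tmap M -` S \<inter> space torus_measure = S \<longrightarrow>
        measure torus_measure S = 0 \<or> measure torus_measure S = 1)"

definition periodic_orbit :: "int^'n^'n \<Rightarrow> (real^'n) set \<Rightarrow> bool" where
  "periodic_orbit M Orb \<longleftrightarrow>
     (\<exists>x \<in> torus. \<exists>p::nat. p > 0 \<and> (tmap M ^^ p) x = x \<and>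
        Orb = {(tmap M ^^ j) x | j. True})"

definition orbit_period :: "(real^'n) set \<Rightarrow> nat" where
  "orbit_period Orb = card Orb"

definition orbit_dist :: "(real^'n) set \<Rightarrow> real" where
  "orbit_dist Orb = Min {tdist x y | x y. x \<in> Orb \<and> y \<in> Orb \<and> x \<noteq> y}"

text \<open>A sequence of periodic orbits is uniformly distributed if d(O_k)^n T(O_k) \<ge> C > 0
  for all k (so each d(O_k) is defined, i.e. each O_k has at least two points) and
  T(O_k) \<rightarrow> \<infinity>.\<close>
definition unif_distributed :: "int^'n^'n \<Rightarrow> (nat \<Rightarrow> (real^'n) set) \<Rightarrow> bool" where
  "unif_distributed M Orb \<longleftrightarrow>
     (\<forall>k. periodic_orbit M (Orb k) \<and> orbit_period (Orb k) \<ge> 2) \<and>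
     (\<exists>C>0. \<forall>k. orbit_dist (Orb k) ^ CARD('n) * real (orbit_period (Orb k)) \<ge> C) \<and>
     filterlim (\<lambda>k. orbit_period (Orb k)) at_top sequentially"

end

theory Submission
  imports Defs
begin

text \<open>A periodic orbit \<open>O\<close> of \<open>B\<close> lifts along the finite-to-one semiconjugacy
  \<open>x \<mapsto> P x mod 1\<close> to a periodic orbit \<open>O'\<close> of \<open>A\<close> mapping onto \<open>O\<close>: the fibre over a
  point of \<open>O\<close> is finite and invariant under \<open>A\<^sup>p\<close> (\<open>p\<close> the period of \<open>O\<close>), so it contains
  an \<open>A\<close>-periodic point. Hence \<open>T(O') \<ge> T(O)\<close>. If \<open>|P v| \<le> K |v|\<close>, two points of \<open>O'\<close> with
  distinct images are at distance at least \<open>d(O)/K\<close>; two distinct points with the same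
  image differ by a non-lattice vector that \<open>P\<close> maps into the lattice, so they are at
  distance at least \<open>1/K\<close>. Thus \<open>d(O') \<ge> min(d(O),1)/K\<close> and
  \<open>d(O')\<^sup>n T(O') \<ge> min(C,2)/K\<^sup>n\<close>.\<close>

definition frac_vec :: "real^'n \<Rightarrow> real^'n" where
  "frac_vec x = (\<chi> i. frac (x $ i))"

lemma int_lattice_add: "a \<in> int_lattice \<Longrightarrow> b \<in> int_lattice \<Longrightarrow> a + b \<in> int_lattice"
  by (simp add: int_lattice_def)

lemma int_lattice_diff: "a \<in> int_lattice \<Longrightarrow> b \<in> int_lattice \<Longrightarrow> a - b \<in> int_lattice"
  by (simp add: int_lattice_def)

lemma zero_in_int_lattice: "0 \<in> int_lattice"
  by (simp add: int_lattice_def)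

lemma rmat_mult_int_lattice: "m \<in> int_lattice \<Longrightarrow> rmat M *v m \<in> int_lattice"
  unfolding int_lattice_def matrix_vector_mult_def rmat_def
  by (auto intro!: Ints_sum Ints_mult)

lemma int_lattice_norm_ge_1:
  assumes "m \<in> int_lattice" "m \<noteq> 0"
  shows "1 \<le> norm m"
proof -
  obtain i where "m $ i \<noteq> 0" "m $ i \<in> \<int>"
    using assms by (auto simp: int_lattice_def vec_eq_iff)
  then have "1 \<le> \<bar>m $ i\<bar>" by (metis Ints_nonzero_abs_ge1)
  then show ?thesis using component_le_norm_cart[of m i] by linarith
qed

lemma finite_vec_components:
  assumes "finite S"
  shows "finite {x :: 'a^'n. \<forall>i. x $ i \<in> S}"
proof -
  have "{x :: 'a^'n. \<forall>i. x $ i \<in> S} \<subseteq> vec_lambda ` PiE UNIV (\<lambda>_. S)"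
    by (auto intro!: image_eqI[where x = "vec_nth x" for x])
  moreover have "finite (vec_lambda ` PiE (UNIV :: 'n set) (\<lambda>_. S))"
    using assms by (simp add: finite_PiE)
  ultimately show ?thesis by (rule finite_subset)
qed

lemma finite_int_lattice_norm_le: "finite {m :: real^'n. m \<in> int_lattice \<and> norm m \<le> R}"
proof -
  have "{m :: real^'n. m \<in> int_lattice \<and> norm m \<le> R} \<subseteq> {x. \<forall>i. x $ i \<in> {k \<in> \<int>. \<bar>k\<bar> \<le> R}}"
    using component_le_norm_cart order_trans by (fastforce simp: int_lattice_def)
  then show ?thesis
    using finite_vec_components[OF finite_abs_int_segment] by (rule finite_subset)
qed

lemma frac_vec_in_torus: "frac_vec x \<in> torus"
  by (simp add: frac_vec_def torus_def frac_lt_1)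

lemma frac_vec_id: "x \<in> torus \<Longrightarrow> frac_vec x = x"
  by (simp add: frac_vec_def torus_def vec_eq_iff frac_eq)

lemma frac_vec_minus_in_int_lattice: "frac_vec x - x \<in> int_lattice"
  by (simp add: frac_vec_def int_lattice_def frac_def)

lemma frac_vec_eq_iff: "frac_vec x = frac_vec y \<longleftrightarrow> x - y \<in> int_lattice"
proof
  assume "frac_vec x = frac_vec y"
  then have "x - y = (frac_vec y - y) - (frac_vec x - x)" by simp
  then show "x - y \<in> int_lattice"
    by (metis int_lattice_diff frac_vec_minus_in_int_lattice)
next
  assume "x - y \<in> int_lattice"
  then show "frac_vec x = frac_vec y"
    by (auto simp: frac_vec_def int_lattice_def vec_eq_iff frac_add_int_right
             dest!: frac_add_int_right[of "x $ i - y $ i" "y $ i" for i])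
qed

lemma torus_subset_cbox: "torus \<subseteq> cbox 0 1"
  by (auto simp: torus_def mem_box_cart less_imp_le)

lemma tmap_eq_frac_vec: "tmap M x = frac_vec (rmat M *v x)"
  by (simp add: tmap_def frac_vec_def)

lemma tmap_in_torus: "tmap M x \<in> torus"
  by (simp add: tmap_eq_frac_vec frac_vec_in_torus)

lemma tmap_frac_vec: "tmap M (frac_vec x) = tmap M x"
proof -
  have "rmat M *v frac_vec x - rmat M *v x \<in> int_lattice"
    by (metis rmat_mult_int_lattice frac_vec_minus_in_int_lattice matrix_vector_mult_diff_distrib)
  then show ?thesis
    by (simp add: tmap_eq_frac_vec frac_vec_eq_iff)
qed

lemma rmat_mult: "rmat (M ** N) = rmat M ** rmat N"
  by (simp add: rmat_def matrix_matrix_mult_def vec_eq_iff)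

lemma tmap_mult: "tmap (M ** N) x = tmap M (tmap N x)"
  by (metis tmap_eq_frac_vec tmap_frac_vec rmat_mult matrix_vector_mul_assoc)

lemma det_rmat: "det (rmat M) = of_int (det M)"
  by (simp add: det_def rmat_def)

lemma invertible_rmat: "det M \<noteq> 0 \<Longrightarrow> invertible (rmat M)"
  by (simp add: invertible_det_nz det_rmat)

lemma funpow_tmap_in_torus: "x \<in> torus \<Longrightarrow> (tmap M ^^ j) x \<in> torus"
  by (cases j) (simp_all add: tmap_in_torus)

lemma funpow_semiconj:
  assumes "\<And>x. h (f x) = g (h x)"
  shows "h ((f ^^ j) x) = (g ^^ j) (h x)"
  by (induction j) (simp_all add: assms)

lemma finite_periodic_orbit:
  assumes "p > 0" "(f ^^ p) x = x"
  shows "finite {(f ^^ j) x | j. True}"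
proof -
  have "{(f ^^ j) x | j. True} \<subseteq> (\<lambda>j. (f ^^ j) x) ` {..<p}"
  proof
    fix z assume "z \<in> {(f ^^ j) x | j. True}"
    then obtain j where "z = (f ^^ j) x"
      by blast
    then have "z = (f ^^ (j mod p)) x"
      by (simp add: funpow_mod_eq[OF assms(2)])
    then show "z \<in> (\<lambda>j. (f ^^ j) x) ` {..<p}"
      using assms(1) by simp
  qed
  then show ?thesis
    using finite_subset by blast
qed

lemma periodic_point_in_invariant_finite:
  assumes "finite F" "\<And>y. y \<in> F \<Longrightarrow> f y \<in> F" "y0 \<in> F"
  obtains y q where "y \<in> F" "q > 0" "(f ^^ q) y = y"
proof -
  have in_F: "(f ^^ k) y0 \<in> F" for k
    by (induction k) (simp_all add: assms)
  have "finite (range (\<lambda>k. (f ^^ k) y0))"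
    using in_F by (blast intro: finite_subset[OF _ assms(1)])
  then have "\<not> inj (\<lambda>k. (f ^^ k) y0)"
    using finite_imageD infinite_UNIV_nat by blast
  then obtain i j where "i \<noteq> j" "(f ^^ i) y0 = (f ^^ j) y0"
    by (auto simp: inj_def)
  then obtain i j where "i < j" "(f ^^ i) y0 = (f ^^ j) y0"
    by (metis linorder_neqE_nat)
  then have "(f ^^ (j - i)) ((f ^^ i) y0) = (f ^^ i) y0"
    by (metis funpow_add le_add_diff_inverse2 less_imp_le_nat o_apply)
  moreover have "j - i > 0"
    using \<open>i < j\<close> by simp
  ultimately show ?thesis
    using that in_F by blast
qed

lemma periodic_orbit_finite:
  assumes "periodic_orbit M Ob"
  shows "finite Ob"
proof -
  obtain x p where "p > 0" "(tmap M ^^ p) x = x" and Ob: "Ob = {(tmap M ^^ j) x | j. True}"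
    using assms unfolding periodic_orbit_def by blast
  then show ?thesis
    using finite_periodic_orbit by (simp only: Ob)
qed

lemma finite_tmap_fibre:
  assumes "det P \<noteq> 0"
  shows "finite {y \<in> torus. tmap P y = x}"
proof -
  let ?F = "{y \<in> torus. tmap P y = x}"
  define g where "g y = rmat P *v y - x" for y
  have "inj (\<lambda>y. rmat P *v y)"
    using assms by (simp add: inj_matrix_vector_mult invertible_rmat)
  then have "inj g"
    by (simp add: g_def inj_def)
  have "bounded ((\<lambda>y. rmat P *v y) ` torus)"
    using bounded_subset[OF bounded_cbox torus_subset_cbox]
    by (rule bounded_linear_image) (rule matrix_vector_mul_bounded_linear)
  then have "bounded ((\<lambda>z. z - x) ` (\<lambda>y. rmat P *v y) ` torus)"
    by (rule bounded_translation_minus)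
  then have "bounded (g ` torus)"
    by (simp add: g_def image_image)
  then obtain r where r: "\<And>y. y \<in> torus \<Longrightarrow> norm (g y) \<le> r"
    by (auto simp: bounded_iff)
  have "g y \<in> int_lattice" if "tmap P y = x" for y
  proof -
    have "frac_vec (rmat P *v y) = frac_vec x"
      using that frac_vec_id[OF tmap_in_torus, of P y] by (simp add: tmap_eq_frac_vec)
    then show ?thesis
      by (simp add: g_def frac_vec_eq_iff)
  qed
  then have "g ` ?F \<subseteq> {m. m \<in> int_lattice \<and> norm m \<le> r}"
    using r by auto
  then have "finite (g ` ?F)"
    by (rule finite_subset[OF _ finite_int_lattice_norm_le])
  then show ?thesis
    by (rule finite_imageD) (rule inj_on_subset[OF \<open>inj g\<close> subset_UNIV])
qed

lemma tmap_surj_torus: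
  assumes "det P \<noteq> 0" "x \<in> torus"
  obtains y where "y \<in> torus" "tmap P y = x"
proof -
  obtain Q where "rmat P ** Q = mat 1"
    using invertible_rmat[OF assms(1)] unfolding invertible_def by blast
  then have "tmap P (frac_vec (Q *v x)) = x"
    using assms(2)
    by (simp only: tmap_frac_vec) (simp add: tmap_eq_frac_vec matrix_vector_mul_assoc frac_vec_id)
  then show ?thesis
    using that frac_vec_in_torus by blast
qed

lemma periodic_orbit_lift:
  assumes "det P \<noteq> 0" "P ** A = B ** P" "periodic_orbit B Ob"
  obtains Ob' where "periodic_orbit A Ob'" "Ob' \<subseteq> torus" "tmap P ` Ob' = Ob"
proof -
  obtain x p where x: "x \<in> torus" "p > 0" "(tmap B ^^ p) x = x"
    and Ob: "Ob = {(tmap B ^^ j) x | j. True}"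
    using assms(3) unfolding periodic_orbit_def by blast
  have semiconj: "tmap P ((tmap A ^^ j) y) = (tmap B ^^ j) (tmap P y)" for j y
    by (rule funpow_semiconj) (metis assms(2) tmap_mult)
  let ?F = "{y \<in> torus. tmap P y = x}"
  have invariant: "(tmap A ^^ p) y \<in> ?F" if "y \<in> ?F" for y
    using that funpow_tmap_in_torus[of y] by (simp add: semiconj x(3))
  obtain y0 where "y0 \<in> ?F"
    using tmap_surj_torus[OF assms(1) x(1)] by blast
  then obtain y q where y: "y \<in> ?F" "q > 0" "((tmap A ^^ p) ^^ q) y = y"
    using periodic_point_in_invariant_finite[where f = "tmap A ^^ p",
          OF finite_tmap_fibre[OF assms(1)] invariant] by blast
  define Ob' where "Ob' = {(tmap A ^^ j) y | j. True}"
  show ?thesis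
  proof
    show "periodic_orbit A Ob'"
      unfolding periodic_orbit_def Ob'_def
      using y x(2) by (intro bexI[of _ y] exI[of _ "p * q"]) (simp_all add: funpow_mult)
    show "Ob' \<subseteq> torus"
      using y(1) funpow_tmap_in_torus by (auto simp: Ob'_def)
    have "tmap P ((tmap A ^^ j) y) = (tmap B ^^ j) x" for j
      using y(1) by (simp add: semiconj)
    then show "tmap P ` Ob' = Ob"
      by (simp add: Ob'_def Ob full_SetCompr_eq image_image)
  qed
qed

lemma tdist_greatest:
  "(\<And>m. m \<in> int_lattice \<Longrightarrow> c \<le> norm (x - y - m)) \<Longrightarrow> c \<le> tdist x y"
  unfolding tdist_def using zero_in_int_lattice by (intro cInf_greatest) auto

lemma tdist_le_norm: "m \<in> int_lattice \<Longrightarrow> tdist x y \<le> norm (x - y - m)"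
  unfolding tdist_def by (rule cInf_lower) (auto intro: bdd_belowI[where m = 0])

lemma tdist_nonneg: "0 \<le> tdist x y"
  by (rule tdist_greatest) simp

lemma tdist_tmap_le:
  fixes x y :: "real^'n"
  assumes "K > 0" "\<And>v. norm (rmat P *v v) \<le> K * norm v"
  shows "tdist (tmap P x) (tmap P y) \<le> K * tdist x y"
proof -
  let ?R = "rmat P"
  have "tdist (tmap P x) (tmap P y) / K \<le> tdist x y"
  proof (rule tdist_greatest)
    fix m :: "real^'n" assume m: "m \<in> int_lattice"
    have "tmap P x - tmap P y - ?R *v (x - y - m)
          = (frac_vec (?R *v x) - ?R *v x) - (frac_vec (?R *v y) - ?R *v y) + ?R *v m"
      by (simp add: tmap_eq_frac_vec matrix_vector_mult_diff_distrib algebra_simps)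
    also have "\<dots> \<in> int_lattice"
      by (intro int_lattice_add int_lattice_diff frac_vec_minus_in_int_lattice
          rmat_mult_int_lattice m)
    finally have "tdist (tmap P x) (tmap P y)
        \<le> norm (tmap P x - tmap P y - (tmap P x - tmap P y - ?R *v (x - y - m)))"
      by (rule tdist_le_norm)
    also have "\<dots> = norm (?R *v (x - y - m))"
      by simp
    also have "\<dots> \<le> K * norm (x - y - m)"
      by (rule assms(2))
    finally show "tdist (tmap P x) (tmap P y) / K \<le> norm (x - y - m)"
      using assms(1) by (simp add: field_simps)
  qed
  then show ?thesis
    using assms(1) by (simp add: field_simps)
qed

lemma tdist_ge_if_tmap_eq:
  fixes x y :: "real^'n"
  assumes "det P \<noteq> 0" "K > 0" "\<And>v. norm (rmat P *v v) \<le> K * norm v"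
    and "x \<in> torus" "y \<in> torus" "x \<noteq> y" "tmap P x = tmap P y"
  shows "1 / K \<le> tdist x y"
proof (rule tdist_greatest)
  fix m :: "real^'n" assume m: "m \<in> int_lattice"
  let ?w = "x - y - m"
  have "?w \<notin> int_lattice"
  proof
    assume "?w \<in> int_lattice"
    then have "x - y \<in> int_lattice"
      using int_lattice_add[OF _ m] by fastforce
    then show False
      using assms(4-6) frac_vec_id frac_vec_eq_iff by metis
  qed
  then have "rmat P *v ?w \<noteq> 0"
    using inj_matrix_vector_mult[OF invertible_rmat[OF assms(1)]] zero_in_int_lattice
    by (metis inj_eq matrix_vector_mult_0_right)
  moreover have "rmat P *v ?w \<in> int_lattice"
  proof -
    have "rmat P *v x - rmat P *v y \<in> int_lattice"
      using assms(7) by (simp add: tmap_eq_frac_vec frac_vec_eq_iff)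
    then show ?thesis
      using int_lattice_diff rmat_mult_int_lattice[OF m]
      by (fastforce simp: matrix_vector_mult_diff_distrib)
  qed
  ultimately have "1 \<le> norm (rmat P *v ?w)"
    by (rule int_lattice_norm_ge_1[rotated])
  also have "\<dots> \<le> K * norm ?w"
    by (rule assms(3))
  finally show "1 / K \<le> norm ?w"
    using assms(2) by (simp add: field_simps)
qed

lemma finite_tdist_pairs:
  "finite Ob \<Longrightarrow> finite {tdist x y | x y. x \<in> Ob \<and> y \<in> Ob \<and> x \<noteq> y}"
  by (rule finite_subset[of _ "(\<lambda>(x, y). tdist x y) ` (Ob \<times> Ob)"]) auto

lemma orbit_dist_attained:
  assumes "finite Ob" "2 \<le> card Ob"
  obtains u v where "u \<in> Ob" "v \<in> Ob" "u \<noteq> v" "orbit_dist Ob = tdist u v"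
proof -
  let ?S = "{tdist x y | x y. x \<in> Ob \<and> y \<in> Ob \<and> x \<noteq> y}"
  have "finite ?S"
    using assms(1) by (rule finite_tdist_pairs)
  moreover have "?S \<noteq> {}"
    using assms card_le_Suc0_iff_eq[OF assms(1)] by fastforce
  ultimately have "Min ?S \<in> ?S"
    by (rule Min_in)
  then show ?thesis
    using that unfolding orbit_dist_def by blast
qed

lemma orbit_dist_le_tdist:
  assumes "finite Ob" "u \<in> Ob" "v \<in> Ob" "u \<noteq> v"
  shows "orbit_dist Ob \<le> tdist u v"
  unfolding orbit_dist_def using assms finite_tdist_pairs by (intro Min_le) auto

lemma orbit_dist_nonneg: "finite Ob \<Longrightarrow> 2 \<le> card Ob \<Longrightarrow> 0 \<le> orbit_dist Ob"
  by (metis orbit_dist_attained tdist_nonneg)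

lemma orbit_dist_lift_ge:
  assumes "det P \<noteq> 0" "K > 0" "\<And>v. norm (rmat P *v v) \<le> K * norm v"
    and "Ob' \<subseteq> torus" "finite Ob'" "2 \<le> card Ob'" "tmap P ` Ob' = Ob"
  shows "min (orbit_dist Ob) 1 / K \<le> orbit_dist Ob'"
proof -
  obtain u v where uv: "u \<in> Ob'" "v \<in> Ob'" "u \<noteq> v" "orbit_dist Ob' = tdist u v"
    using orbit_dist_attained[OF assms(5,6)] by blast
  show ?thesis
  proof (cases "tmap P u = tmap P v")
    case True
    have "min (orbit_dist Ob) 1 / K \<le> 1 / K"
      using assms(2) by (simp add: divide_right_mono)
    also have "\<dots> \<le> tdist u v"
      using tdist_ge_if_tmap_eq[OF assms(1-3)] uv(1-3) assms(4) True by blast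
    finally show ?thesis
      using uv(4) by simp
  next
    case False
    have "orbit_dist Ob \<le> tdist (tmap P u) (tmap P v)"
      using orbit_dist_le_tdist[OF _ _ _ False] assms(5,7) uv(1,2) by blast
    also have "\<dots> \<le> K * tdist u v"
      by (rule tdist_tmap_le[OF assms(2,3)])
    finally have "orbit_dist Ob / K \<le> tdist u v"
      using assms(2) by (simp add: field_simps)
    moreover have "min (orbit_dist Ob) 1 / K \<le> orbit_dist Ob / K"
      using assms(2) by (simp add: divide_right_mono)
    ultimately show ?thesis
      using uv(4) by simp
  qed
qed

lemma periodic_orbit_lift_estimates:
  assumes "det P \<noteq> 0" "P ** A = B ** P" "K > 0" "\<And>v. norm (rmat P *v v) \<le> K * norm v"
    and "periodic_orbit B Ob" "2 \<le> card Ob"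
  obtains Ob' where "periodic_orbit A Ob'" "card Ob \<le> card Ob'"
    "min (orbit_dist Ob) 1 / K \<le> orbit_dist Ob'"
proof -
  obtain Ob' where Ob': "periodic_orbit A Ob'" "Ob' \<subseteq> torus" "tmap P ` Ob' = Ob"
    using periodic_orbit_lift[OF assms(1,2,5)] by blast
  have "card Ob \<le> card Ob'"
    using card_image_le[OF periodic_orbit_finite[OF Ob'(1)]] Ob'(3) by blast
  moreover have "min (orbit_dist Ob) 1 / K \<le> orbit_dist Ob'"
    using orbit_dist_lift_ge[OF assms(1,3,4) Ob'(2) periodic_orbit_finite[OF Ob'(1)] _ Ob'(3)]
      assms(6) calculation by linarith
  ultimately show ?thesis
    using that Ob'(1) by blast
qed

lemma min_div_pow_le_pow_mult:
  fixes C d d' K :: real and T T' :: nat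
  assumes "C \<le> d ^ n * T" "2 \<le> T" "0 \<le> d" "K > 0" "min d 1 / K \<le> d'" "T \<le> T'"
  shows "min C 2 / K ^ n \<le> d' ^ n * T'"
proof -
  have "min C 2 \<le> min d 1 ^ n * T"
    using assms(1,2) by (cases "d \<le> 1") (auto simp: min_def)
  then have "min C 2 / K ^ n \<le> (min d 1 / K) ^ n * T"
    using assms(4) by (simp add: power_divide divide_right_mono)
  also have "\<dots> \<le> d' ^ n * T'"
  proof -
    have "0 \<le> min d 1 / K"
      using assms(3,4) by simp
    then show ?thesis
      using assms(5,6) by (intro mult_mono power_mono) auto
  qed
  finally show ?thesis .
qed

theorem lemma3p1:
  fixes A P B :: "int^'n^'n"
  assumes "det A \<noteq> 0"
    and "ergodic_tmap A"
    and "det P \<noteq> 0"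
    and "P ** A = B ** P"
    and "\<exists>Orb. unif_distributed B Orb"
  shows "\<exists>Orb. unif_distributed A Orb"
proof -
  obtain Orb C where per: "\<And>k. periodic_orbit B (Orb k)" and card: "\<And>k. 2 \<le> card (Orb k)"
    and C: "C > 0" "\<And>k. C \<le> orbit_dist (Orb k) ^ CARD('n) * card (Orb k)"
    and lim: "filterlim (\<lambda>k. card (Orb k)) at_top sequentially"
    using assms(5) unfolding unif_distributed_def orbit_period_def by blast
  obtain K where K: "K > 0" "\<And>v. norm (rmat P *v v) \<le> K * norm v"
    using bounded_linear.pos_bounded[OF matrix_vector_mul_bounded_linear[of "rmat P"]]
    by (auto simp: mult.commute)
  have "\<exists>Ob'. periodic_orbit A Ob' \<and> card (Orb k) \<le> card Ob' \<and>
      min (orbit_dist (Orb k)) 1 / K \<le> orbit_dist Ob'" for k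
    using periodic_orbit_lift_estimates[OF assms(3,4) K per[of k] card[of k]] by blast
  then obtain Orb' where Orb': "\<And>k. periodic_orbit A (Orb' k)" "\<And>k. card (Orb k) \<le> card (Orb' k)"
    "\<And>k. min (orbit_dist (Orb k)) 1 / K \<le> orbit_dist (Orb' k)"
    by metis
  have "min C 2 / K ^ CARD('n) \<le> orbit_dist (Orb' k) ^ CARD('n) * card (Orb' k)" for k
    by (rule min_div_pow_le_pow_mult[OF C(2) card
          orbit_dist_nonneg[OF periodic_orbit_finite[OF per] card] K(1) Orb'(3) Orb'(2)])
  moreover have "min C 2 / K ^ CARD('n) > 0"
    using C(1) K(1) by simp
  moreover have "filterlim (\<lambda>k. card (Orb' k)) at_top sequentially"
    by (rule filterlim_at_top_mono[OF lim]) (simp add: Orb'(2))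
  ultimately have "unif_distributed A Orb'"
    unfolding unif_distributed_def orbit_period_def using Orb'(1,2) card order_trans by blast
  then show ?thesis by blast
qed

end
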